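(* Let $J\ge2$ be an integer and $\Lambda=[2,2^J]\cap\mathbb Q$. Let $\bm\Theta$ be the set of $\bm\theta=(\sigma^2,Q^2,\phi,\varsigma^2,\omega^2,\gamma^2,\alpha,\beta)$ with $\sigma^2,Q^2,\varsigma^2,\omega^2,\gamma^2,\alpha\in(0,\infty)$, $\phi\in(-1,0)\cup(0,1)$, $\beta\in(0,\pi]$. For $\tau\in\Lambda$ and $\bm\theta\in\bm\Theta$ define $$\nu_\tau(\bm\theta)=\frac{\sigma^2}{\tau}+\frac{6Q^2}{\tau^2}+\frac{\varsigma^2\{(\phi^2-1)\tau+2\phi(\phi^\tau-4\phi^{\tau/2}+3)\}}{(\phi-1)^3(\phi+1)\tau^2}+\frac{\tau^2\omega^2}{16}+\frac{(\tau^2+2)\gamma^2}{12\tau}+\frac{\alpha^2\{1-\cos(\beta\tau/2)\}^2}{\tau^2\{1-\cos\beta\}}.$$ If $\bm\theta_1,\bm\theta_2\in\bm\Theta$ satisfy $\nu_\tau(\bm\theta_1)=\nu_\tau(\bm\theta_2)$ for all $\tau\in\Lambda$, then $\bm\theta_1=\bm\theta_2$.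
   Context: For non-integer $\tau$ the power $\phi^\tau$ is defined as $e^{\tau\ln\phi}$ if $\phi\in(0,1)$ and as $e^{\tau(i\pi+\ln(-\phi))}$ if $\phi\in(-1,0)$ (so $\nu_\tau$ may be complex-valued). The six summands are, respectively, the Haar wavelet variances (extended to a continuous scale $\tau$) of a white noise with variance $\sigma^2$, a quantization noise with parameter $Q^2$, a causal AR(1) process with coefficient $\phi$ and innovation variance $\varsigma^2$, a linear drift with parameter $\omega$, a random walk with innovation variance $\gamma^2$, and a sinusoidal process $\alpha\sin(\beta t+U)$, $U\sim\mathcal U(0,2\pi)$. *)

theory Defs
  imports "HOL-Analysis.Analysis"
begin

definition phipow :: "real \<Rightarrow> real \<Rightarrow> complex" where
  "phipow phi t =
     (if 0 < phi then complex_of_real (exp (t * ln phi))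
      else exp (complex_of_real t * (\<i> * complex_of_real pi + complex_of_real (ln (- phi)))))"

definition Theta :: "(real \<times> real \<times> real \<times> real \<times> real \<times> real \<times> real \<times> real) set" where
  "Theta = {(s2, q2, phi, v2, w2, g2, a, b).
     0 < s2 \<and> 0 < q2 \<and> phi \<in> {-1<..<0} \<union> {0<..<1} \<and> 0 < v2 \<and> 0 < w2 \<and> 0 < g2
     \<and> 0 < a \<and> b \<in> {0<..pi}}"

definition nu :: "real \<Rightarrow> (real \<times> real \<times> real \<times> real \<times> real \<times> real \<times> real \<times> real) \<Rightarrow> complex" where
  "nu tau theta = (case theta of (s2, q2, phi, v2, w2, g2, a, b) \<Rightarrow>
      complex_of_real (s2 / tau + 6 * q2 / tau\<^sup>2)
    + complex_of_real v2 * ((complex_of_real ((phi\<^sup>2 - 1) * tau))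
         + 2 * complex_of_real phi * (phipow phi tau - 4 * phipow phi (tau / 2) + 3))
      / complex_of_real ((phi - 1) ^ 3 * (phi + 1) * tau\<^sup>2)
    + complex_of_real (tau\<^sup>2 * w2 / 16 + (tau\<^sup>2 + 2) * g2 / (12 * tau)
         + a\<^sup>2 * (1 - cos (b * tau / 2))\<^sup>2 / (tau\<^sup>2 * (1 - cos b))))"

definition Lambda :: "nat \<Rightarrow> real set" where
  "Lambda J = {2 .. 2 ^ J} \<inter> \<rat>"

end

theory Submission
  imports Defs "HOL-Complex_Analysis.Complex_Analysis" "HOL-Computational_Algebra.Polynomial"
begin

text \<open>
  Replacing \<tau> by a complex variable makes \<nu>(\<tau>, \<theta>) holomorphic in the right half-plane, and
  \<Lambda> accumulates at 3, so equality on \<Lambda> extends to all \<tau> > 0. There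
  \<tau>^2 Re \<nu>(\<tau>, \<theta>) is the polynomial \<omega>^2 \<tau>^4/16 + \<gamma>^2 \<tau>^3/12 + (\<sigma>^2 + \<gamma>^2/6 + \<varsigma>^2/(\<phi>-1)^2) \<tau>
  plus a bounded remainder C + A (1 - cos(\<beta>\<tau>/2))^2 + K e(\<tau>), where e(\<tau>) = Re(\<phi>^\<tau> - 4 \<phi>^(\<tau>/2))
  tends to 0; so growth rates separate the polynomial coefficients. Along the \<tau> where
  cos(\<beta>\<tau>/2) = 1 or -1 the remainder tends to C or C + 4A; comparing these extremes for both
  parameter vectors identifies C and A, and then \<beta>, because each sinusoid has to vanish wherever
  the other one does. What is left at \<tau> = 2m is K (\<phi>^(2m) - 4 \<phi>^m), whose consecutive ratios
  tend to \<phi>.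
\<close>

definition phi_ln :: "real \<Rightarrow> complex" where
  "phi_ln phi =
     (if 0 < phi then of_real (ln phi) else \<i> * of_real pi + of_real (ln (- phi)))"

lemma phipow_eq_exp: "phipow phi t = exp (of_real t * phi_ln phi)"
  unfolding phipow_def phi_ln_def by (simp flip: exp_of_real of_real_mult)

lemma exp_phi_ln: "phi \<noteq> 0 \<Longrightarrow> exp (phi_ln phi) = of_real phi"
  unfolding phi_ln_def by (auto simp: exp_add exp_of_real)

lemma Re_phi_ln: "phi \<noteq> 0 \<Longrightarrow> Re (phi_ln phi) = ln \<bar>phi\<bar>"
  unfolding phi_ln_def by auto

lemma phipow_of_nat: "phi \<noteq> 0 \<Longrightarrow> phipow phi (real m) = of_real (phi ^ m)"
  by (simp add: phipow_eq_exp exp_of_nat_mult exp_phi_ln)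

lemma norm_phipow: "phi \<noteq> 0 \<Longrightarrow> norm (phipow phi t) = exp (t * ln \<bar>phi\<bar>)"
  by (simp add: phipow_eq_exp Re_phi_ln)

lemma cos_lt_1_of_pos_le_pi: "0 < b \<Longrightarrow> b \<le> pi \<Longrightarrow> cos b < 1"
  using cos_monotone_0_pi[of 0 b] by simp

subsection \<open>Extension to all positive scales\<close>

definition nu_complex ::
    "(real \<times> real \<times> real \<times> real \<times> real \<times> real \<times> real \<times> real) \<Rightarrow> complex \<Rightarrow> complex" where
  "nu_complex theta z = (case theta of (s, q, phi, v, w, g, a, b) \<Rightarrow>
      of_real s / z + 6 * of_real q / z\<^sup>2
    + of_real v * (of_real (phi\<^sup>2 - 1) * z
        + 2 * of_real phi * (exp (z * phi_ln phi) - 4 * exp (z / 2 * phi_ln phi) + 3))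
      / (of_real ((phi - 1) ^ 3 * (phi + 1)) * z\<^sup>2)
    + z\<^sup>2 * of_real w / 16 + (z\<^sup>2 + 2) * of_real g / (12 * z)
    + of_real (a\<^sup>2) * (1 - cos (of_real b * z / 2))\<^sup>2 / (z\<^sup>2 * of_real (1 - cos b)))"

lemma nu_complex_of_real: "nu_complex theta (of_real tau) = nu tau theta"
proof -
  obtain s q phi v w g a b where th: "theta = (s, q, phi, v, w, g, a, b)"
    by (cases theta) auto
  have "cos (of_real b * of_real tau / 2) = complex_of_real (cos (b * tau / 2))"
    by (metis cos_of_real of_real_divide of_real_mult of_real_numeral)
  then show ?thesis
    unfolding th nu_complex_def nu_def phipow_eq_exp by (simp add: mult.commute)
qed

lemma holomorphic_on_nu_complex:
  assumes "theta \<in> Theta"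
  shows "nu_complex theta holomorphic_on {z. 0 < Re z}"
proof -
  obtain s q phi v w g a b where th: "theta = (s, q, phi, v, w, g, a, b)"
    by (cases theta) auto
  with assms have "(phi - 1) ^ 3 * (phi + 1) \<noteq> 0" "1 - cos b \<noteq> 0"
    using cos_lt_1_of_pos_le_pi[of b] by (auto simp: Theta_def)
  then show ?thesis
    unfolding th nu_complex_def by (auto intro!: holomorphic_intros)
qed

lemma islimpt_Lambda:
  assumes "J \<ge> 2"
  shows "3 islimpt (complex_of_real ` Lambda J)"
  unfolding islimpt_approachable
proof (intro allI impI)
  fix e :: real
  assume "0 < e"
  have "(2::real) ^ 2 \<le> 2 ^ J"
    using assms by (intro power_increasing) auto
  obtain q where q: "q \<in> \<rat>" "3 < q" "q < 3 + min e 1"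
    using Rats_dense_in_real[of 3 "3 + min e 1"] \<open>0 < e\<close> by auto
  then have "q \<in> Lambda J"
    unfolding Lambda_def using \<open>2 ^ 2 \<le> 2 ^ J\<close> by auto
  moreover have "complex_of_real q \<noteq> 3"
    using q by (metis less_irrefl of_real_eq_iff of_real_numeral)
  moreover have "dist (complex_of_real q) 3 = dist q 3"
    by (metis dist_of_real of_real_numeral)
  then have "dist (complex_of_real q) 3 < e"
    using q by (simp add: dist_real_def)
  ultimately show "\<exists>x'\<in>complex_of_real ` Lambda J. x' \<noteq> 3 \<and> dist x' 3 < e"
    by blast
qed

lemma nu_eq_on_pos_reals:
  assumes "J \<ge> 2" "theta1 \<in> Theta" "theta2 \<in> Theta"
    and eq: "\<forall>tau \<in> Lambda J. nu tau theta1 = nu tau theta2" and "0 < t"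
  shows "nu t theta1 = nu t theta2"
proof -
  let ?f = "\<lambda>z. nu_complex theta1 z - nu_complex theta2 z"
  have "?f holomorphic_on {z. 0 < Re z}"
    using assms(2,3) by (intro holomorphic_intros holomorphic_on_nu_complex)
  moreover have "open {z. 0 < Re z}" "connected {z. 0 < Re z}"
    by (simp_all add: open_halfspace_Re_gt convex_connected convex_halfspace_Re_gt)
  moreover have "complex_of_real ` Lambda J \<subseteq> {z. 0 < Re z}"
    unfolding Lambda_def by auto
  ultimately have "?f (of_real t) = 0"
    by (rule analytic_continuation[OF _ _ _ _ _ islimpt_Lambda[OF assms(1)]])
      (use eq \<open>0 < t\<close> in \<open>auto simp: nu_complex_of_real\<close>)
  then show ?thesis
    by (simp add: nu_complex_of_real)
qed

subsection \<open>Polynomial growth\<close>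

lemma poly_bounded_on_pos_imp_degree_0:
  fixes p :: "real poly"
  assumes "\<forall>t>0. \<bar>poly p t\<bar> \<le> B"
  shows "degree p = 0"
proof (rule ccontr)
  assume "degree p \<noteq> 0"
  then have "filterlim (poly p) at_infinity at_top"
    using filterlim_poly_at_infinity filterlim_mono at_top_le_at_infinity by blast
  then have "eventually (\<lambda>t. max B 0 + 1 \<le> \<bar>poly p t\<bar>) at_top"
    by (simp add: filterlim_at_infinity[of 0])
  moreover have "eventually (\<lambda>t. \<bar>poly p t\<bar> \<le> B) at_top"
    using eventually_gt_at_top[of 0] by eventually_elim (use assms in auto)
  ultimately have "eventually (\<lambda>t::real. False) at_top"
    by eventually_elim linarith
  then show False
    by simp
qed

lemma poly_eq_if_eq_up_to_bounded:
  fixes p1 p2 :: "real poly"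
  assumes "\<forall>t>0. poly p1 t + f1 t = poly p2 t + f2 t"
    and "\<forall>t>0. \<bar>f1 t\<bar> \<le> B1" "\<forall>t>0. \<bar>f2 t\<bar> \<le> B2"
    and "coeff p1 0 = coeff p2 0"
  shows "p1 = p2"
proof -
  have "\<bar>poly (p1 - p2) t\<bar> \<le> B1 + B2" if "0 < t" for t
  proof -
    have "poly (p1 - p2) t = f2 t - f1 t"
      using assms(1) that by (simp add: poly_diff algebra_simps)
    moreover have "\<bar>f1 t\<bar> \<le> B1" "\<bar>f2 t\<bar> \<le> B2"
      using assms(2,3) that by auto
    ultimately show ?thesis
      using abs_triangle_ineq4[of "f2 t" "f1 t"] by linarith
  qed
  then have "degree (p1 - p2) = 0"
    by (intro poly_bounded_on_pos_imp_degree_0) auto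
  then have "p1 - p2 = [:coeff (p1 - p2) 0:]"
    by (rule degree_0_id[symmetric])
  with assms(4) show ?thesis
    by simp
qed

subsection \<open>The transient of the AR(1) component\<close>

definition ar_transient :: "real \<Rightarrow> real \<Rightarrow> real" where
  "ar_transient phi t = Re (phipow phi t - 4 * phipow phi (t / 2))"

definition power_transient :: "real \<Rightarrow> nat \<Rightarrow> real" where
  "power_transient p m = p ^ (2 * m) - 4 * p ^ m"

lemma ar_transient_of_nat:
  "phi \<noteq> 0 \<Longrightarrow> ar_transient phi (2 * real m) = power_transient phi m"
  using phipow_of_nat[of phi "2 * m"] phipow_of_nat[of phi m]
  by (simp add: ar_transient_def power_transient_def)

lemma abs_ar_transient_le:
  assumes "phi \<noteq> 0"
  shows "\<bar>ar_transient phi t\<bar> \<le> exp (t * ln \<bar>phi\<bar>) + 4 * exp (t / 2 * ln \<bar>phi\<bar>)"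
proof -
  have "\<bar>ar_transient phi t\<bar> \<le> norm (phipow phi t - 4 * phipow phi (t / 2))"
    unfolding ar_transient_def by (rule abs_Re_le_cmod)
  also have "\<dots> \<le> norm (phipow phi t) + norm (4 * phipow phi (t / 2))"
    by (rule norm_triangle_ineq4)
  also have "\<dots> = exp (t * ln \<bar>phi\<bar>) + 4 * exp (t / 2 * ln \<bar>phi\<bar>)"
    using assms by (simp add: norm_phipow norm_mult)
  finally show ?thesis .
qed

lemma abs_ar_transient_le_5:
  assumes "phi \<noteq> 0" "\<bar>phi\<bar> < 1" "0 \<le> t"
  shows "\<bar>ar_transient phi t\<bar> \<le> 5"
proof -
  have "ln \<bar>phi\<bar> < 0"
    using assms by simp
  then have "exp (t * ln \<bar>phi\<bar>) \<le> 1" "exp (t / 2 * ln \<bar>phi\<bar>) \<le> 1"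
    using assms(3) by (auto simp: mult_nonneg_nonpos)
  then show ?thesis
    using abs_ar_transient_le[OF assms(1), of t] by linarith
qed

lemma tendsto_exp_mult_neg_at_top:
  assumes "(c::real) < 0"
  shows "((\<lambda>t. exp (t * c)) \<longlongrightarrow> 0) at_top"
proof -
  have "filterlim (\<lambda>t. c * t) at_bot at_top"
    using assms by (intro filterlim_tendsto_neg_mult_at_bot[OF tendsto_const _ filterlim_ident])
  then show ?thesis
    by (simp add: mult.commute filterlim_compose[OF exp_at_bot])
qed

lemma ar_transient_tendsto_0:
  assumes "phi \<noteq> 0" "\<bar>phi\<bar> < 1"
  shows "(ar_transient phi \<longlongrightarrow> 0) at_top"
proof (rule Lim_null_comparison)
  have "ln \<bar>phi\<bar> < 0"
    using assms by simp
  then have "((\<lambda>t. exp (t * ln \<bar>phi\<bar>) + 4 * exp (t * (ln \<bar>phi\<bar> / 2))) \<longlongrightarrow> 0 + 4 * 0) at_top"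
    by (intro tendsto_intros tendsto_exp_mult_neg_at_top) auto
  then show "((\<lambda>t. exp (t * ln \<bar>phi\<bar>) + 4 * exp (t * (ln \<bar>phi\<bar> / 2))) \<longlongrightarrow> 0) at_top"
    by simp
  show "\<forall>\<^sub>F t in at_top. norm (ar_transient phi t)
          \<le> exp (t * ln \<bar>phi\<bar>) + 4 * exp (t * (ln \<bar>phi\<bar> / 2))"
    using abs_ar_transient_le[OF assms(1)] by (simp add: mult.commute mult.left_commute)
qed

lemma power_transient_ratio_tendsto:
  assumes "p \<noteq> 0" "\<bar>p\<bar> < 1"
  shows "(\<lambda>n. power_transient p (Suc (Suc n)) / power_transient p (Suc n)) \<longlonglongrightarrow> p"
proof -
  have pow: "(\<lambda>n. p ^ n) \<longlonglongrightarrow> 0"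
    using assms by (intro LIMSEQ_power_zero) simp
  have "(\<lambda>n. p * (p ^ Suc (Suc n) - 4) / (p ^ Suc n - 4)) \<longlonglongrightarrow> p * (0 - 4) / (0 - 4)"
    using LIMSEQ_Suc[OF pow] LIMSEQ_Suc[OF LIMSEQ_Suc[OF pow]] by (intro tendsto_intros) simp_all
  moreover have "power_transient p (Suc (Suc n)) / power_transient p (Suc n)
      = p * (p ^ Suc (Suc n) - 4) / (p ^ Suc n - 4)" for n
  proof -
    define u where "u = p ^ Suc n"
    have "\<bar>u\<bar> = \<bar>p\<bar> ^ Suc n"
      unfolding u_def by (rule power_abs)
    also have "\<dots> \<le> 1"
      using assms by (intro power_le_one) auto
    finally have "u - 4 \<noteq> 0"
      by auto
    moreover have "u \<noteq> 0"
      unfolding u_def using assms by simp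
    moreover have pows: "p ^ (2 * Suc n) = u * u" "p ^ (2 * Suc (Suc n)) = (p * u) * (p * u)"
      "p ^ Suc (Suc n) = p * u" "p ^ Suc n = u"
      unfolding u_def by (simp_all add: mult_2 power_add)
    ultimately show ?thesis
      unfolding power_transient_def pows by (simp add: field_simps)
  qed
  ultimately show ?thesis
    by simp
qed

lemma power_transient_unique:
  assumes "p1 \<noteq> 0" "\<bar>p1\<bar> < 1" "p2 \<noteq> 0" "\<bar>p2\<bar> < 1" "K1 \<noteq> 0" "K2 \<noteq> 0"
    and eq: "\<And>m. m \<ge> 1 \<Longrightarrow> K1 * power_transient p1 m = K2 * power_transient p2 m"
  shows "p1 = p2 \<and> K1 = K2"
proof -
  have "power_transient p1 (Suc (Suc n)) / power_transient p1 (Suc n)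
      = power_transient p2 (Suc (Suc n)) / power_transient p2 (Suc n)" for n
  proof -
    have "power_transient p1 (Suc (Suc n)) / power_transient p1 (Suc n)
        = (K1 * power_transient p1 (Suc (Suc n))) / (K1 * power_transient p1 (Suc n))"
      using assms(5) by simp
    also have "\<dots> = (K2 * power_transient p2 (Suc (Suc n))) / (K2 * power_transient p2 (Suc n))"
      by (simp only: eq[of "Suc n"] eq[of "Suc (Suc n)"] le_add1 Suc_le_mono)
    finally show ?thesis
      using assms(6) by simp
  qed
  then have "p1 = p2"
    using power_transient_ratio_tendsto[OF assms(1,2)] power_transient_ratio_tendsto[OF assms(3,4)]
    by (simp add: LIMSEQ_unique)
  moreover have "p1 * (p1 - 4) \<noteq> 0"
    using assms(1,2) by auto
  then have "power_transient p1 1 \<noteq> 0"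
    by (simp add: power_transient_def power2_eq_square algebra_simps)
  ultimately show ?thesis
    using eq[of 1] by simp
qed

subsection \<open>The sinusoidal component\<close>

lemma cos_eq_1_if_cos_mult_tendsto_1:
  assumes "(\<lambda>n. cos (x * real (Suc n))) \<longlonglongrightarrow> 1"
  shows "cos x = 1"
proof -
  let ?c = "\<lambda>n. cos (x * real (Suc n))" and ?s = "\<lambda>n. sin (x * real (Suc n))"
  have "(\<lambda>n. (?s n)\<^sup>2) \<longlonglongrightarrow> 0"
    using tendsto_diff[OF tendsto_const[of 1] tendsto_power[OF assms, of 2]]
    by (simp add: sin_squared_eq)
  then have "(\<lambda>n. \<bar>?s n\<bar>) \<longlonglongrightarrow> 0"
    using tendsto_real_sqrt by fastforce
  then have "(\<lambda>n. ?c n * cos x - ?s n * sin x) \<longlonglongrightarrow> 1 * cos x - 0 * sin x"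
    by (intro tendsto_intros assms) (simp add: tendsto_rabs_zero_iff)
  moreover have "?c (Suc n) = ?c n * cos x - ?s n * sin x" for n
    using cos_add[of "x * real (Suc n)" x] by (simp add: algebra_simps)
  ultimately have "(\<lambda>n. ?c (Suc n)) \<longlonglongrightarrow> cos x"
    by simp
  then show ?thesis
    using LIMSEQ_Suc[OF assms] LIMSEQ_unique by fastforce
qed

lemma filterlim_mult_Suc_at_top: "0 < c \<Longrightarrow> filterlim (\<lambda>n. c * real (Suc n)) at_top sequentially"
  by (intro filterlim_tendsto_pos_mult_at_top[OF tendsto_const]
      filterlim_compose[OF filterlim_real_sequentially filterlim_Suc])

lemma one_minus_cos_sq_le_4: "(1 - cos (x::real))\<^sup>2 \<le> 4"
proof -
  have "\<bar>1 - cos x\<bar> \<le> 2"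
    using cos_le_one[of x] cos_ge_minus_one[of x] by linarith
  then show ?thesis
    using abs_le_square_iff[of "1 - cos x" 2] by simp
qed

lemma cos_sq_sum_extremes_le:
  fixes e1 e2 :: "real \<Rightarrow> real"
  assumes eq: "\<forall>t>0. C1 + A1 * (1 - cos (b1 * t / 2))\<^sup>2 + e1 t = C2 + A2 * (1 - cos (b2 * t / 2))\<^sup>2 + e2 t"
    and "(e1 \<longlongrightarrow> 0) at_top" "(e2 \<longlongrightarrow> 0) at_top" and "0 \<le> A2" "0 < b1"
  shows "C2 \<le> C1 \<and> C1 + 4 * A1 \<le> C2 + 4 * A2"
proof
  define t where "t n = 4 * pi / b1 * real (Suc n)" for n
  define s where "s n = 2 * pi / b1 * real (Suc (2 * n))" for n
  have t: "filterlim t at_top sequentially"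
    unfolding t_def using \<open>0 < b1\<close> by (intro filterlim_mult_Suc_at_top) simp
  have "filterlim (\<lambda>n::nat. 2 * n) sequentially sequentially"
    by (intro filterlim_subseq) (simp add: strict_mono_def)
  then have s: "filterlim s at_top sequentially"
    unfolding s_def using \<open>0 < b1\<close>
    by (intro filterlim_compose[OF filterlim_mult_Suc_at_top, of "2 * pi / b1"]) simp_all
  have lim: "(\<lambda>n. e1 (t n) - e2 (t n)) \<longlonglongrightarrow> 0" "(\<lambda>n. e1 (s n) - e2 (s n)) \<longlonglongrightarrow> 0"
    using tendsto_diff[OF filterlim_compose[OF assms(2) t] filterlim_compose[OF assms(3) t]]
      tendsto_diff[OF filterlim_compose[OF assms(2) s] filterlim_compose[OF assms(3) s]]
    by simp_all
  \<comment> \<open>along \<open>t\<close> the first sinusoid vanishes, along \<open>s\<close> it attains its maximum 4\<close>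
  have cos: "cos (b1 * t n / 2) = 1" "cos (b1 * s n / 2) = -1" for n
  proof -
    have "b1 * t n / 2 = real (2 * Suc n) * pi" "b1 * s n / 2 = real (2 * n + 1) * pi"
      unfolding s_def t_def using \<open>0 < b1\<close> by (simp_all add: field_simps)
    then show "cos (b1 * t n / 2) = 1" "cos (b1 * s n / 2) = -1"
      by (simp_all only: cos_npi) simp_all
  qed
  have pos: "0 < t n" "0 < s n" for n
    unfolding s_def t_def using \<open>0 < b1\<close> by simp_all
  have "C2 \<le> C1 + (e1 (t n) - e2 (t n))" for n
    using eq[rule_format, OF pos(1)] cos(1) \<open>0 \<le> A2\<close> by (simp add: algebra_simps)
  then show "C2 \<le> C1"
    using LIMSEQ_le_const[OF tendsto_add[OF tendsto_const lim(1)]] by simp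
  have "C1 + 4 * A1 + (e1 (s n) - e2 (s n)) \<le> C2 + 4 * A2" for n
    using eq[rule_format, OF pos(2)] cos(2) \<open>0 \<le> A2\<close>
      mult_left_mono[OF one_minus_cos_sq_le_4[of "b2 * s n / 2"] \<open>0 \<le> A2\<close>]
    by (simp add: algebra_simps)
  then show "C1 + 4 * A1 \<le> C2 + 4 * A2"
    using LIMSEQ_le_const2[OF tendsto_add[OF tendsto_const lim(2)]] by simp
qed

lemma cos_sq_sum_ratio_Ints:
  fixes e1 e2 :: "real \<Rightarrow> real"
  assumes eq: "\<forall>t>0. A * (1 - cos (b1 * t / 2))\<^sup>2 + e1 t = A * (1 - cos (b2 * t / 2))\<^sup>2 + e2 t"
    and "(e1 \<longlongrightarrow> 0) at_top" "(e2 \<longlongrightarrow> 0) at_top" and "0 < A" "0 < b1"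
  shows "b2 / b1 \<in> \<int>"
proof -
  define t where "t n = 4 * pi / b1 * real (Suc n)" for n
  have t: "filterlim t at_top sequentially"
    unfolding t_def using \<open>0 < b1\<close> by (intro filterlim_mult_Suc_at_top) simp
  have "(\<lambda>n. (e1 (t n) - e2 (t n)) / A) \<longlonglongrightarrow> (0 - 0) / A"
    using filterlim_compose[OF assms(2) t] filterlim_compose[OF assms(3) t] \<open>0 < A\<close>
    by (intro tendsto_divide tendsto_diff tendsto_const) auto
  moreover have "(e1 (t n) - e2 (t n)) / A = (1 - cos (b2 * t n / 2))\<^sup>2" for n
  proof -
    have "b1 * t n / 2 = real (2 * Suc n) * pi"
      unfolding t_def using \<open>0 < b1\<close> by (simp add: field_simps)
    then have "cos (b1 * t n / 2) = 1"
      by (simp only: cos_npi) simp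
    moreover have "0 < t n"
      unfolding t_def using \<open>0 < b1\<close> by simp
    ultimately show ?thesis
      using eq[rule_format, OF \<open>0 < t n\<close>] \<open>0 < A\<close> by (simp add: field_simps)
  qed
  ultimately have "(\<lambda>n. sqrt ((1 - cos (b2 * t n / 2))\<^sup>2)) \<longlonglongrightarrow> sqrt 0"
    by (intro tendsto_intros) simp
  then have "(\<lambda>n. 1 - (1 - cos (b2 * t n / 2))) \<longlonglongrightarrow> 1 - 0"
    by (intro tendsto_intros) (simp add: tendsto_rabs_zero_iff)
  moreover have "b2 * t n / 2 = 2 * pi * (b2 / b1) * real (Suc n)" for n
    unfolding t_def using \<open>0 < b1\<close> by (simp add: field_simps)
  ultimately have "cos (2 * pi * (b2 / b1)) = 1"
    by (intro cos_eq_1_if_cos_mult_tendsto_1) simp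
  then obtain k :: int where "2 * pi * (b2 / b1) = real_of_int k * 2 * pi"
    unfolding cos_one_2pi_int by blast
  then have "(2 * pi) * (b2 / b1) = (2 * pi) * of_int k"
    by (simp add: algebra_simps)
  then have "b2 / b1 = of_int k"
    by (subst (asm) mult_left_cancel) auto
  then show ?thesis
    by simp
qed

lemma Ints_pos_eq_1_if_inverse_Ints:
  fixes r :: real
  assumes "0 < r" "r \<in> \<int>" "inverse r \<in> \<int>"
  shows "r = 1"
proof -
  obtain k m :: int where km: "r = of_int k" "inverse r = of_int m"
    using assms(2,3) Ints_cases by metis
  have "r * inverse r = 1"
    using assms(1) by simp
  then have "of_int (k * m) = (1::real)"
    using km by simp
  then have "k * m = 1"
    by (metis of_int_eq_1_iff)
  moreover have "0 < k"
    using km assms(1) by simp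
  ultimately have "k = 1"
    using pos_zmult_eq_1_iff by blast
  then show ?thesis
    using km by simp
qed

lemma cos_sq_sum_unique:
  fixes e1 e2 :: "real \<Rightarrow> real"
  assumes eq: "\<forall>t>0. C1 + A1 * (1 - cos (b1 * t / 2))\<^sup>2 + e1 t = C2 + A2 * (1 - cos (b2 * t / 2))\<^sup>2 + e2 t"
    and e: "(e1 \<longlongrightarrow> 0) at_top" "(e2 \<longlongrightarrow> 0) at_top"
    and "0 < A1" "0 < A2" "0 < b1" "0 < b2"
  shows "C1 = C2 \<and> A1 = A2 \<and> b1 = b2"
proof -
  have "C2 \<le> C1 \<and> C1 + 4 * A1 \<le> C2 + 4 * A2"
    by (rule cos_sq_sum_extremes_le[OF eq e]) (use assms in auto)
  moreover have "\<forall>t>0. C2 + A2 * (1 - cos (b2 * t / 2))\<^sup>2 + e2 t = C1 + A1 * (1 - cos (b1 * t / 2))\<^sup>2 + e1 t"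
    using eq by simp
  then have "C1 \<le> C2 \<and> C2 + 4 * A2 \<le> C1 + 4 * A1"
    by (rule cos_sq_sum_extremes_le[OF _ e(2,1)]) (use assms in auto)
  ultimately have C: "C1 = C2" and A: "A1 = A2"
    by auto
  with eq have eq': "\<forall>t>0. A1 * (1 - cos (b1 * t / 2))\<^sup>2 + e1 t = A1 * (1 - cos (b2 * t / 2))\<^sup>2 + e2 t"
    by auto
  have "b2 / b1 \<in> \<int>"
    using assms by (intro cos_sq_sum_ratio_Ints[OF eq' e]) auto
  moreover have "\<forall>t>0. A1 * (1 - cos (b2 * t / 2))\<^sup>2 + e2 t = A1 * (1 - cos (b1 * t / 2))\<^sup>2 + e1 t"
    using eq' by simp
  then have "inverse (b2 / b1) \<in> \<int>"
    using assms cos_sq_sum_ratio_Ints[OF _ e(2,1)] by simp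
  ultimately have "b2 / b1 = 1"
    using assms by (intro Ints_pos_eq_1_if_inverse_Ints) auto
  with C A \<open>0 < b1\<close> show ?thesis
    by simp
qed

lemma sinusoid_transient_sum_unique:
  assumes eq: "\<forall>t>0. C1 + A1 * (1 - cos (b1 * t / 2))\<^sup>2 + K1 * ar_transient p1 t
                    = C2 + A2 * (1 - cos (b2 * t / 2))\<^sup>2 + K2 * ar_transient p2 t"
    and "0 < A1" "0 < A2" "0 < b1" "0 < b2"
    and p: "p1 \<noteq> 0" "\<bar>p1\<bar> < 1" "p2 \<noteq> 0" "\<bar>p2\<bar> < 1" and "K1 \<noteq> 0" "K2 \<noteq> 0"
  shows "C1 = C2 \<and> A1 = A2 \<and> b1 = b2 \<and> p1 = p2 \<and> K1 = K2"
proof -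
  have "((\<lambda>t. K1 * ar_transient p1 t) \<longlongrightarrow> 0) at_top" "((\<lambda>t. K2 * ar_transient p2 t) \<longlongrightarrow> 0) at_top"
    using p by (auto intro: tendsto_mult_right_zero ar_transient_tendsto_0)
  then have CAb: "C1 = C2 \<and> A1 = A2 \<and> b1 = b2"
    using assms by (intro cos_sq_sum_unique[OF eq]) auto
  have "K1 * power_transient p1 m = K2 * power_transient p2 m" if "m \<ge> 1" for m
    using eq[rule_format, of "2 * real m"] CAb that p by (simp add: ar_transient_of_nat)
  then have "p1 = p2 \<and> K1 = K2"
    using assms by (intro power_transient_unique) auto
  with CAb show ?thesis
    by simp
qed

subsection \<open>Separating the components\<close>

definition ar_gain :: "real \<Rightarrow> real \<Rightarrow> real" where
  "ar_gain phi v = 2 * phi * v / ((phi - 1) ^ 3 * (phi + 1))"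

definition sinusoid_gain :: "real \<Rightarrow> real \<Rightarrow> real" where
  "sinusoid_gain a b = a\<^sup>2 / (1 - cos b)"

lemma Re_nu:
  "Re (nu t (s, q, phi, v, w, g, a, b)) =
     s / t + 6 * q / t\<^sup>2
   + v * ((phi\<^sup>2 - 1) * t + 2 * phi * (ar_transient phi t + 3)) / ((phi - 1) ^ 3 * (phi + 1) * t\<^sup>2)
   + (t\<^sup>2 * w / 16 + (t\<^sup>2 + 2) * g / (12 * t) + a\<^sup>2 * (1 - cos (b * t / 2))\<^sup>2 / (t\<^sup>2 * (1 - cos b)))"
  unfolding nu_def ar_transient_def by (simp add: Re_divide_of_real)

lemma nu_scaled_expansion:
  assumes "-1 < phi" "phi < 1" "0 < t" "cos b < 1"
  shows "t\<^sup>2 * Re (nu t (s, q, phi, v, w, g, a, b)) =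
     poly [:0, s + g / 6 + v / (phi - 1)\<^sup>2, 0, g / 12, w / 16:] t
     + (6 * q + 3 * ar_gain phi v + sinusoid_gain a b * (1 - cos (b * t / 2))\<^sup>2
        + ar_gain phi v * ar_transient phi t)"
proof -
  have nz: "phi - 1 \<noteq> 0" "phi + 1 \<noteq> 0" "t \<noteq> 0" "1 - cos b \<noteq> 0"
    using assms by auto
  have gen: "m \<noteq> 0 \<Longrightarrow> d \<noteq> 0 \<Longrightarrow>
      t\<^sup>2 * (v * (m * t + 2 * phi * (e + 3)) / (d * m * t\<^sup>2)) = v / d * t + 2 * phi * v / (d * m) * (e + 3)"
    for m d e :: real
    using nz(3) by (simp add: field_simps)
  have fac: "phi\<^sup>2 - 1 = (phi - 1) * (phi + 1)"
    "(phi - 1) ^ 3 * (phi + 1) = (phi - 1)\<^sup>2 * ((phi - 1) * (phi + 1))"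
    by (simp_all add: power2_eq_square power3_eq_cube algebra_simps)
  have ar: "t\<^sup>2 * (v * ((phi\<^sup>2 - 1) * t + 2 * phi * (e + 3)) / ((phi - 1) ^ 3 * (phi + 1) * t\<^sup>2))
      = v / (phi - 1)\<^sup>2 * t + ar_gain phi v * (e + 3)" for e
    unfolding ar_gain_def fac by (rule gen) (use nz in simp_all)
  have drift: "t\<^sup>2 * (t\<^sup>2 * w / 16 + (t\<^sup>2 + 2) * g / (12 * t)
        + a\<^sup>2 * (1 - cos (b * t / 2))\<^sup>2 / (t\<^sup>2 * (1 - cos b)))
      = w / 16 * t ^ 4 + g / 12 * t ^ 3 + g / 6 * t + sinusoid_gain a b * (1 - cos (b * t / 2))\<^sup>2"
    using nz by (simp add: sinusoid_gain_def field_simps power2_eq_square power3_eq_cube power4_eq_xxxx)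
  have "t\<^sup>2 * Re (nu t (s, q, phi, v, w, g, a, b))
      = t\<^sup>2 * (s / t) + t\<^sup>2 * (6 * q / t\<^sup>2)
      + t\<^sup>2 * (v * ((phi\<^sup>2 - 1) * t + 2 * phi * (ar_transient phi t + 3)) / ((phi - 1) ^ 3 * (phi + 1) * t\<^sup>2))
      + t\<^sup>2 * (t\<^sup>2 * w / 16 + (t\<^sup>2 + 2) * g / (12 * t)
        + a\<^sup>2 * (1 - cos (b * t / 2))\<^sup>2 / (t\<^sup>2 * (1 - cos b)))"
    unfolding Re_nu by (simp only: distrib_left)
  also have "\<dots> = s * t + 6 * q + (v / (phi - 1)\<^sup>2 * t + ar_gain phi v * (ar_transient phi t + 3))
      + (w / 16 * t ^ 4 + g / 12 * t ^ 3 + g / 6 * t + sinusoid_gain a b * (1 - cos (b * t / 2))\<^sup>2)"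
    using nz by (simp only: ar drift) (simp add: power2_eq_square)
  finally show ?thesis
    by (simp add: algebra_simps power2_eq_square power3_eq_cube power4_eq_xxxx)
qed

lemma remainder_bounded:
  assumes "phi \<noteq> 0" "\<bar>phi\<bar> < 1"
  shows "\<exists>B. \<forall>t>0. \<bar>C + A * (1 - cos (b * t / 2))\<^sup>2 + K * ar_transient phi t\<bar> \<le> B"
proof (intro exI allI impI)
  fix t :: real
  assume "0 < t"
  have "\<bar>A * (1 - cos (b * t / 2))\<^sup>2\<bar> \<le> \<bar>A\<bar> * 4"
    unfolding abs_mult by (intro mult_left_mono) (simp_all add: one_minus_cos_sq_le_4)
  moreover have "\<bar>K * ar_transient phi t\<bar> \<le> \<bar>K\<bar> * 5"
    unfolding abs_mult using assms \<open>0 < t\<close> by (intro mult_left_mono abs_ar_transient_le_5) simp_all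
  ultimately show "\<bar>C + A * (1 - cos (b * t / 2))\<^sup>2 + K * ar_transient phi t\<bar> \<le> \<bar>C\<bar> + 4 * \<bar>A\<bar> + 5 * \<bar>K\<bar>"
    by linarith
qed

lemma ar_gain_eq_iff:
  assumes "phi \<noteq> 0" "\<bar>phi\<bar> < 1"
  shows "ar_gain phi v1 = ar_gain phi v2 \<longleftrightarrow> v1 = v2"
  using assms by (auto simp: ar_gain_def)

lemma sinusoid_gain_eq_iff:
  assumes "0 < a1" "0 < a2" "cos b < 1"
  shows "sinusoid_gain a1 b = sinusoid_gain a2 b \<longleftrightarrow> a1 = a2"
  using assms by (auto simp: sinusoid_gain_def power2_eq_iff_nonneg)

lemma Re_nu_eq_imp_invariants_eq:
  assumes "(s1, q1, p1, v1, w1, g1, a1, b1) \<in> Theta" "(s2, q2, p2, v2, w2, g2, a2, b2) \<in> Theta"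
    and eq: "\<forall>t>0. Re (nu t (s1, q1, p1, v1, w1, g1, a1, b1)) = Re (nu t (s2, q2, p2, v2, w2, g2, a2, b2))"
  shows "w1 = w2 \<and> g1 = g2 \<and> s1 + g1 / 6 + v1 / (p1 - 1)\<^sup>2 = s2 + g2 / 6 + v2 / (p2 - 1)\<^sup>2
    \<and> 6 * q1 + 3 * ar_gain p1 v1 = 6 * q2 + 3 * ar_gain p2 v2
    \<and> sinusoid_gain a1 b1 = sinusoid_gain a2 b2 \<and> b1 = b2 \<and> p1 = p2 \<and> ar_gain p1 v1 = ar_gain p2 v2"
proof -
  have H1: "-1 < p1" "p1 < 1" "p1 \<noteq> 0" "\<bar>p1\<bar> < 1" "0 < v1" "0 < a1" "0 < b1" "cos b1 < 1"
    using assms(1) cos_lt_1_of_pos_le_pi[of b1] unfolding Theta_def by auto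
  have H2: "-1 < p2" "p2 < 1" "p2 \<noteq> 0" "\<bar>p2\<bar> < 1" "0 < v2" "0 < a2" "0 < b2" "cos b2 < 1"
    using assms(2) cos_lt_1_of_pos_le_pi[of b2] unfolding Theta_def by auto
  define P1 where "P1 = [:0, s1 + g1 / 6 + v1 / (p1 - 1)\<^sup>2, 0, g1 / 12, w1 / 16:]"
  define P2 where "P2 = [:0, s2 + g2 / 6 + v2 / (p2 - 1)\<^sup>2, 0, g2 / 12, w2 / 16:]"
  define R1 where "R1 t = 6 * q1 + 3 * ar_gain p1 v1 + sinusoid_gain a1 b1 * (1 - cos (b1 * t / 2))\<^sup>2
    + ar_gain p1 v1 * ar_transient p1 t" for t
  define R2 where "R2 t = 6 * q2 + 3 * ar_gain p2 v2 + sinusoid_gain a2 b2 * (1 - cos (b2 * t / 2))\<^sup>2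
    + ar_gain p2 v2 * ar_transient p2 t" for t
  have sum_eq: "\<forall>t>0. poly P1 t + R1 t = poly P2 t + R2 t"
  proof (intro allI impI)
    fix t :: real
    assume "0 < t"
    then have "t\<^sup>2 * Re (nu t (s1, q1, p1, v1, w1, g1, a1, b1)) = poly P1 t + R1 t"
      "t\<^sup>2 * Re (nu t (s2, q2, p2, v2, w2, g2, a2, b2)) = poly P2 t + R2 t"
      unfolding P1_def P2_def R1_def R2_def by (intro nu_scaled_expansion H1 H2 \<open>0 < t\<close>)+
    then show "poly P1 t + R1 t = poly P2 t + R2 t"
      using eq \<open>0 < t\<close> by simp
  qed
  moreover obtain B1 B2 where "\<forall>t>0. \<bar>R1 t\<bar> \<le> B1" "\<forall>t>0. \<bar>R2 t\<bar> \<le> B2"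
    unfolding R1_def R2_def using remainder_bounded[OF H1(3,4)] remainder_bounded[OF H2(3,4)] by metis
  ultimately have "P1 = P2"
    by (rule poly_eq_if_eq_up_to_bounded) (simp add: P1_def P2_def)
  then have "w1 = w2" "g1 = g2" "s1 + g1 / 6 + v1 / (p1 - 1)\<^sup>2 = s2 + g2 / 6 + v2 / (p2 - 1)\<^sup>2"
    by (simp_all add: P1_def P2_def)
  moreover from sum_eq \<open>P1 = P2\<close> have "\<forall>t>0. R1 t = R2 t"
    by simp
  then have "6 * q1 + 3 * ar_gain p1 v1 = 6 * q2 + 3 * ar_gain p2 v2
      \<and> sinusoid_gain a1 b1 = sinusoid_gain a2 b2 \<and> b1 = b2 \<and> p1 = p2 \<and> ar_gain p1 v1 = ar_gain p2 v2"
    using H1 H2 unfolding R1_def R2_def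
    by (intro sinusoid_transient_sum_unique) (simp_all add: sinusoid_gain_def ar_gain_def)
  ultimately show ?thesis
    by blast
qed

lemma Re_nu_inj_on_Theta:
  assumes "theta1 \<in> Theta" "theta2 \<in> Theta"
    and "\<forall>t>0. Re (nu t theta1) = Re (nu t theta2)"
  shows "theta1 = theta2"
proof -
  obtain s1 q1 p1 v1 w1 g1 a1 b1 where th1: "theta1 = (s1, q1, p1, v1, w1, g1, a1, b1)"
    by (cases theta1) auto
  obtain s2 q2 p2 v2 w2 g2 a2 b2 where th2: "theta2 = (s2, q2, p2, v2, w2, g2, a2, b2)"
    by (cases theta2) auto
  from assms have inv: "w1 = w2" "g1 = g2" "s1 + g1 / 6 + v1 / (p1 - 1)\<^sup>2 = s2 + g2 / 6 + v2 / (p2 - 1)\<^sup>2"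
    "6 * q1 + 3 * ar_gain p1 v1 = 6 * q2 + 3 * ar_gain p2 v2"
    "sinusoid_gain a1 b1 = sinusoid_gain a2 b2" "b1 = b2" "p1 = p2" "ar_gain p1 v1 = ar_gain p2 v2"
    unfolding th1 th2 by (blast dest: Re_nu_eq_imp_invariants_eq)+
  have H: "p1 \<noteq> 0" "\<bar>p1\<bar> < 1" "0 < a1" "0 < a2" "cos b1 < 1"
    using assms(1,2) cos_lt_1_of_pos_le_pi[of b1] unfolding th1 th2 Theta_def by auto
  have "v1 = v2"
    using inv(7,8) ar_gain_eq_iff[OF H(1,2)] by simp
  moreover have "a1 = a2"
    using inv(5,6) sinusoid_gain_eq_iff[OF H(3-5)] by simp
  moreover have "q1 = q2"
    using inv(4,8) by simp
  moreover have "s1 = s2"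
    using inv(2,3,7) \<open>v1 = v2\<close> by simp
  ultimately show ?thesis
    unfolding th1 th2 using inv(1,2,6,7) by simp
qed

theorem lemma3:
  fixes J :: nat
  assumes "J \<ge> 2"
    and "theta1 \<in> Theta" and "theta2 \<in> Theta"
    and "\<forall>tau \<in> Lambda J. nu tau theta1 = nu tau theta2"
  shows "theta1 = theta2"
  using assms(2,3) nu_eq_on_pos_reals[OF assms] by (intro Re_nu_inj_on_Theta) auto

end
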